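(* Let $(G,\sigma)$ be a signed graph and $S\subseteq V(G)$. Then $S$ is $s$-redundant if and only if for every $z\in S$ and every $x,y\in N(z)\setminus S$ with $xy\notin E(G)$, there exists $w\in V(G)\setminus S$ such that $x w y z$ is a balanced $4$-cycle of $(G,\sigma)$.
   Context: A signed graph $(G,\sigma)$ is a simple loopless undirected graph with a signature $\sigma:E(G)\to\{+1,-1\}$. Switching a vertex negates the signs of its incident edges; two signatures are equivalent if one is obtained from the other by switching a set of vertices. A path or cycle is balanced if the product of the signs of its edges is $+1$ and unbalanced otherwise; $UP_3$ denotes an unbalanced path on $3$ vertices. $N(z)$ is the neighbourhood of $z$. A set $S\subseteq V(G)$ is $s$-redundant if for all $x,y\in V(G)\setminus S$ with $xy\notin E(G)$, every $z\in S$ and every signature $\sigma'$ equivalent to $\sigma$: if $xzy$ is a $UP_3$ in $(G,\sigma')$, then there exists $w\in V(G)\setminus S$ such that $xwy$ is a $UP_3$ in $(G,\sigma')$. *)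

theory Defs
  imports Main
begin

definition signed_graph :: "'a set \<Rightarrow> ('a \<Rightarrow> 'a \<Rightarrow> bool) \<Rightarrow> ('a \<Rightarrow> 'a \<Rightarrow> int) \<Rightarrow> bool" where
  "signed_graph V E sig \<longleftrightarrow> finite V \<and> (\<forall>u v. E u v \<longrightarrow> u \<in> V \<and> v \<in> V)
     \<and> (\<forall>u v. E u v \<longrightarrow> E v u) \<and> (\<forall>u. \<not> E u u)
     \<and> (\<forall>u v. E u v \<longrightarrow> sig u v = sig v u \<and> (sig u v = 1 \<or> sig u v = -1))"

definition switch :: "'a set \<Rightarrow> ('a \<Rightarrow> 'a \<Rightarrow> int) \<Rightarrow> 'a \<Rightarrow> 'a \<Rightarrow> int" where
  "switch X sig u v = (if (u \<in> X) \<noteq> (v \<in> X) then - sig u v else sig u v)"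

definition equiv_sig :: "'a set \<Rightarrow> ('a \<Rightarrow> 'a \<Rightarrow> bool) \<Rightarrow> ('a \<Rightarrow> 'a \<Rightarrow> int) \<Rightarrow> ('a \<Rightarrow> 'a \<Rightarrow> int) \<Rightarrow> bool" where
  "equiv_sig V E sig sig' \<longleftrightarrow> (\<exists>X\<subseteq>V. \<forall>u v. E u v \<longrightarrow> sig' u v = switch X sig u v)"

definition nbhd :: "('a \<Rightarrow> 'a \<Rightarrow> bool) \<Rightarrow> 'a \<Rightarrow> 'a set" where
  "nbhd E z = {v. E z v}"

definition UP3 :: "('a \<Rightarrow> 'a \<Rightarrow> bool) \<Rightarrow> ('a \<Rightarrow> 'a \<Rightarrow> int) \<Rightarrow> 'a \<Rightarrow> 'a \<Rightarrow> 'a \<Rightarrow> bool" where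
  "UP3 E sig x z y \<longleftrightarrow> distinct [x, z, y] \<and> E x z \<and> E z y \<and> sig x z * sig z y = -1"

definition balanced_C4 :: "('a \<Rightarrow> 'a \<Rightarrow> bool) \<Rightarrow> ('a \<Rightarrow> 'a \<Rightarrow> int) \<Rightarrow> 'a \<Rightarrow> 'a \<Rightarrow> 'a \<Rightarrow> 'a \<Rightarrow> bool" where
  "balanced_C4 E sig a b c d \<longleftrightarrow> distinct [a, b, c, d] \<and> E a b \<and> E b c \<and> E c d \<and> E d a
     \<and> sig a b * sig b c * sig c d * sig d a = 1"

definition s_redundant :: "'a set \<Rightarrow> ('a \<Rightarrow> 'a \<Rightarrow> bool) \<Rightarrow> ('a \<Rightarrow> 'a \<Rightarrow> int) \<Rightarrow> 'a set \<Rightarrow> bool" where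
  "s_redundant V E sig S \<longleftrightarrow>
     (\<forall>x \<in> V - S. \<forall>y \<in> V - S. \<not> E x y \<longrightarrow>
       (\<forall>z \<in> S. \<forall>sig'. equiv_sig V E sig sig' \<longrightarrow> UP3 E sig' x z y \<longrightarrow>
          (\<exists>w \<in> V - S. UP3 E sig' x w y)))"

end

theory Submission
  imports Defs
begin

text \<open>Switching multiplies the sign of an edge uv by the signs chosen at u and v, so it does
  not change the sign of any cycle, and every path x z y can be made unbalanced by switching x.
  Once x z y is unbalanced, a second path x w y with w \<noteq> z is unbalanced exactly when the
  4-cycle x w y z is balanced. So for every switching that makes x z y unbalanced, the
  s-redundancy requirement for x, z, y says precisely that some w outside S closes a balanced
  4-cycle with x, y, z, and such a switching always exists.\<close>

lemma balanced_C4_switch_iff: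
  "balanced_C4 E (switch X sig) a b c d \<longleftrightarrow> balanced_C4 E sig a b c d"
  by (auto simp: balanced_C4_def switch_def)

lemma balanced_C4_cong:
  assumes "\<And>u v. E u v \<Longrightarrow> sig' u v = sig u v"
  shows "balanced_C4 E sig' a b c d \<longleftrightarrow> balanced_C4 E sig a b c d"
  using assms by (auto simp: balanced_C4_def)

lemma equiv_sig_balanced_C4_iff:
  assumes "equiv_sig V E sig sig'"
  shows "balanced_C4 E sig' a b c d \<longleftrightarrow> balanced_C4 E sig a b c d"
proof -
  obtain X where "\<And>u v. E u v \<Longrightarrow> sig' u v = switch X sig u v"
    using assms by (auto simp: equiv_sig_def)
  then show ?thesis
    by (simp add: balanced_C4_cong[where sig = "switch X sig"] balanced_C4_switch_iff)
qed

lemma equiv_sig_signed_graph: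
  assumes "signed_graph V E sig" and "equiv_sig V E sig sig'"
  shows "signed_graph V E sig'"
proof -
  obtain X where "\<And>u v. E u v \<Longrightarrow> sig' u v = switch X sig u v"
    using assms(2) by (auto simp: equiv_sig_def)
  with assms(1) show ?thesis
    unfolding signed_graph_def switch_def by (metis minus_equation_iff)
qed

lemma signed_graph_UP3_iff_balanced_C4:
  assumes "signed_graph V E sig" and "UP3 E sig x z y" and "w \<noteq> z"
  shows "UP3 E sig x w y \<longleftrightarrow> balanced_C4 E sig x w y z"
proof -
  have "E y z" "E z x" "sig y z * sig z x = -1"
    using assms(1,2) unfolding signed_graph_def UP3_def by (auto simp: mult.commute)
  then have "sig x w * sig w y * sig y z * sig z x = - (sig x w * sig w y)"
    by (simp add: mult.assoc)
  with \<open>E y z\<close> \<open>E z x\<close> assms(2,3) show ?thesis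
    unfolding UP3_def balanced_C4_def by auto
qed

lemma signed_graph_switch_to_UP3:
  assumes "signed_graph V E sig" and "E x z" and "E z y" and "distinct [x, z, y]"
  obtains sig' where "equiv_sig V E sig sig'" and "UP3 E sig' x z y"
proof (cases "sig x z * sig z y = -1")
  case True
  have "equiv_sig V E sig sig"
    unfolding equiv_sig_def by (rule exI[of _ "{}"]) (simp add: switch_def)
  with True assms(2-4) show ?thesis
    using that unfolding UP3_def by blast
next
  case False
  have "x \<in> V" "sig x z = 1 \<or> sig x z = -1" "sig z y = 1 \<or> sig z y = -1"
    using assms(1-3) unfolding signed_graph_def by blast+
  with False have "- sig x z * sig z y = -1"
    by auto
  moreover have "equiv_sig V E sig (switch {x} sig)"
    unfolding equiv_sig_def using \<open>x \<in> V\<close> by blast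
  ultimately show ?thesis
    using that assms(2-4) unfolding UP3_def by (auto simp: switch_def)
qed

lemma equiv_sig_UP3_detour_iff_balanced_C4:
  assumes "signed_graph V E sig" and "equiv_sig V E sig sig'" and "UP3 E sig' x z y" and "z \<in> S"
  shows "(\<exists>w \<in> V - S. UP3 E sig' x w y) \<longleftrightarrow> (\<exists>w \<in> V - S. balanced_C4 E sig x w y z)"
proof -
  have "UP3 E sig' x w y \<longleftrightarrow> balanced_C4 E sig x w y z" if "w \<in> V - S" for w
    using that assms equiv_sig_signed_graph signed_graph_UP3_iff_balanced_C4
      equiv_sig_balanced_C4_iff by (metis DiffE)
  then show ?thesis
    by blast
qed

theorem proposition5p2:
  fixes V :: "'a set" and E :: "'a \<Rightarrow> 'a \<Rightarrow> bool" and sig :: "'a \<Rightarrow> 'a \<Rightarrow> int" and S :: "'a set"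
  assumes "signed_graph V E sig" and "S \<subseteq> V"
  shows "s_redundant V E sig S \<longleftrightarrow>
    (\<forall>z \<in> S. \<forall>x \<in> nbhd E z - S. \<forall>y \<in> nbhd E z - S. x \<noteq> y \<longrightarrow> \<not> E x y \<longrightarrow>
       (\<exists>w \<in> V - S. balanced_C4 E sig x w y z))"
proof -
  have edges: "E u v \<Longrightarrow> u \<in> V \<and> v \<in> V \<and> E v u" for u v
    using assms(1) unfolding signed_graph_def by blast
  show ?thesis
  proof (intro iffI ballI impI)
    fix z x y
    assume "s_redundant V E sig S" and "z \<in> S" and "x \<in> nbhd E z - S" and "y \<in> nbhd E z - S"
      and "x \<noteq> y" and "\<not> E x y"
    then have "E x z" "E z y" "distinct [x, z, y]" "x \<in> V - S" "y \<in> V - S"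
      using edges by (auto simp: nbhd_def)
    then obtain sig' where "equiv_sig V E sig sig'" "UP3 E sig' x z y"
      using signed_graph_switch_to_UP3[OF assms(1)] by metis
    with \<open>s_redundant V E sig S\<close> \<open>z \<in> S\<close> \<open>\<not> E x y\<close> \<open>x \<in> V - S\<close> \<open>y \<in> V - S\<close>
    show "\<exists>w \<in> V - S. balanced_C4 E sig x w y z"
      using equiv_sig_UP3_detour_iff_balanced_C4[OF assms(1)] unfolding s_redundant_def by blast
  next
    assume C4: "\<forall>z \<in> S. \<forall>x \<in> nbhd E z - S. \<forall>y \<in> nbhd E z - S. x \<noteq> y \<longrightarrow> \<not> E x y \<longrightarrow>
       (\<exists>w \<in> V - S. balanced_C4 E sig x w y z)"
    show "s_redundant V E sig S"
      unfolding s_redundant_def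
    proof (intro ballI allI impI)
      fix x y z sig'
      assume "x \<in> V - S" "y \<in> V - S" "\<not> E x y" "z \<in> S" "equiv_sig V E sig sig'"
        and "UP3 E sig' x z y"
      moreover from this have "x \<in> nbhd E z - S" "y \<in> nbhd E z - S" "x \<noteq> y"
        using edges by (auto simp: nbhd_def UP3_def)
      ultimately show "\<exists>w \<in> V - S. UP3 E sig' x w y"
        using C4 equiv_sig_UP3_detour_iff_balanced_C4[OF assms(1)] by blast
    qed
  qed
qed

end
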